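(* Let $0<\alpha<1$, $L\in C^2([a,b]\times\mathbb{R}^n\times\mathbb{R}^n\times\mathbb{R}^n;\mathbb{R})$ and $I[q]=\int_a^b L(t,q,\dot q,{}^C_aD^\alpha_t q)\,dt$. Let $\Psi_2=\{\psi_2(\varepsilon,\cdot)\}_{\varepsilon\in\mathbb{R}}$ be a one-parameter group of diffeomorphisms of $\mathbb{R}^n$ and suppose $I$ is $\varepsilon$-invariant under $\Psi_2$ without transforming time, i.e. for every solution $q$ of the Euler–Lagrange equation $$\partial_2L-\tfrac{d}{dt}\partial_3L+{}_tD^\alpha_b\partial_4L=0$$ (arguments $(t,q(t),\dot q(t),{}^C_aD^\alpha_tq(t))$), for all $\varepsilon$ and every subinterval $[t_a,t_b]\subseteq[a,b]$, $$\int_{t_a}^{t_b}L\big(t,q(t),\dot q(t),{}^C_aD^\alpha_tq(t)\big)dt=\int_{t_a}^{t_b}L\Big(t,\psi_2(\varepsilon,q(t)),\tfrac{d}{dt}\psi_2(\varepsilon,q(t)),{}^C_aD^\alpha_t\psi_2(\varepsilon,q(t))\Big)dt.$$ Then along every such solution $q$, writing $f_2(t)=\frac{\partial\psi_2}{\partial\varepsilon}(0,q(t))$ and evaluating $\partial_iL$ at $(t,q(t),\dot q(t),{}^C_aD^\alpha_tq(t))$, $$f_2\cdot\frac{d}{dt}\partial_3L+\partial_3L\cdot\frac{d}{dt}f_2+\partial_4L\cdot{}^C_aD^\alpha_t f_2-f_2\cdot{}_tD^\alpha_b\partial_4L=0 .$$ *)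

theory Defs
  imports "HOL-Analysis.Analysis"
begin

definition C2_on :: "'a::euclidean_space set \<Rightarrow> ('a \<Rightarrow> real) \<Rightarrow> bool" where
  "C2_on S f \<longleftrightarrow>
     (\<exists>f' f''. (\<forall>x\<in>S. (f has_derivative blinfun_apply (f' x)) (at x within S)) \<and>
               (\<forall>x\<in>S. (f' has_derivative blinfun_apply (f'' x)) (at x within S)) \<and>
               continuous_on S f'')"

fun dirder :: "('a::real_normed_vector \<Rightarrow> 'b::real_normed_vector) \<Rightarrow> 'a list \<Rightarrow> 'a \<Rightarrow> 'b" where
  "dirder f [] = f"
| "dirder f (v # vs) = (\<lambda>x. vector_derivative (\<lambda>h. dirder f vs (x + h *\<^sub>R v)) (at 0))"

definition smooth_map :: "('a::real_normed_vector \<Rightarrow> 'b::real_normed_vector) \<Rightarrow> bool" where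
  "smooth_map f \<longleftrightarrow>
     (\<forall>vs. continuous_on UNIV (dirder f vs) \<and>
       (\<forall>v x. ((\<lambda>h. dirder f vs (x + h *\<^sub>R v)) has_vector_derivative dirder f (v # vs) x) (at 0)))"

definition one_param_group_diffeo :: "(real \<Rightarrow> 'a::euclidean_space \<Rightarrow> 'a) \<Rightarrow> bool" where
  "one_param_group_diffeo \<psi> \<longleftrightarrow>
     smooth_map (\<lambda>(e, x). \<psi> e x) \<and> \<psi> 0 = id \<and> (\<forall>s t. \<psi> (s + t) = \<psi> s \<circ> \<psi> t) \<and>
     (\<forall>e. bij (\<psi> e))"

definition caputo_left :: "real \<Rightarrow> real \<Rightarrow> (real \<Rightarrow> 'a::euclidean_space) \<Rightarrow> real \<Rightarrow> 'a" where
  "caputo_left a \<alpha> f t =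
     integral {a..t} (\<lambda>s. ((t - s) powr (- \<alpha>) / Gamma (1 - \<alpha>)) *\<^sub>R vector_derivative f (at s within {a..t}))"

definition rl_int_right :: "real \<Rightarrow> real \<Rightarrow> (real \<Rightarrow> 'a::euclidean_space) \<Rightarrow> real \<Rightarrow> 'a" where
  "rl_int_right b \<beta> g t = integral {t..b} (\<lambda>s. ((s - t) powr (\<beta> - 1) / Gamma \<beta>) *\<^sub>R g s)"

definition rl_right_deriv :: "real \<Rightarrow> real \<Rightarrow> real \<Rightarrow> (real \<Rightarrow> 'a::euclidean_space) \<Rightarrow> real \<Rightarrow> 'a" where
  "rl_right_deriv a b \<alpha> g t = - vector_derivative (rl_int_right b (1 - \<alpha>) g) (at t within {a..b})"

definition ddt :: "real \<Rightarrow> real \<Rightarrow> (real \<Rightarrow> 'a::real_normed_vector) \<Rightarrow> real \<Rightarrow> 'a" where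
  "ddt a b f t = vector_derivative f (at t within {a..b})"

definition grad2 :: "(real \<Rightarrow> real^'n \<Rightarrow> real^'n \<Rightarrow> real^'n \<Rightarrow> real) \<Rightarrow> real \<Rightarrow> real^'n \<Rightarrow> real^'n \<Rightarrow> real^'n \<Rightarrow> real^'n" where
  "grad2 L t x v w = (\<chi> i. deriv (\<lambda>h. L t (x + h *\<^sub>R axis i 1) v w) 0)"
definition grad3 :: "(real \<Rightarrow> real^'n \<Rightarrow> real^'n \<Rightarrow> real^'n \<Rightarrow> real) \<Rightarrow> real \<Rightarrow> real^'n \<Rightarrow> real^'n \<Rightarrow> real^'n \<Rightarrow> real^'n" where
  "grad3 L t x v w = (\<chi> i. deriv (\<lambda>h. L t x (v + h *\<^sub>R axis i 1) w) 0)"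
definition grad4 :: "(real \<Rightarrow> real^'n \<Rightarrow> real^'n \<Rightarrow> real^'n \<Rightarrow> real) \<Rightarrow> real \<Rightarrow> real^'n \<Rightarrow> real^'n \<Rightarrow> real^'n \<Rightarrow> real^'n" where
  "grad4 L t x v w = (\<chi> i. deriv (\<lambda>h. L t x v (w + h *\<^sub>R axis i 1)) 0)"

definition along :: "((real \<Rightarrow> real^'n \<Rightarrow> real^'n \<Rightarrow> real^'n \<Rightarrow> real) \<Rightarrow> real \<Rightarrow> real^'n \<Rightarrow> real^'n \<Rightarrow> real^'n \<Rightarrow> 'b)
     \<Rightarrow> (real \<Rightarrow> real^'n \<Rightarrow> real^'n \<Rightarrow> real^'n \<Rightarrow> real) \<Rightarrow> real \<Rightarrow> real \<Rightarrow> real \<Rightarrow> (real \<Rightarrow> real^'n) \<Rightarrow> real \<Rightarrow> 'b" where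
  "along G L a b \<alpha> q t = G L t (q t) (ddt a b q t) (caputo_left a \<alpha> q t)"

definition EL_solution :: "real \<Rightarrow> real \<Rightarrow> real \<Rightarrow> (real \<Rightarrow> real^'n \<Rightarrow> real^'n \<Rightarrow> real^'n \<Rightarrow> real) \<Rightarrow> (real \<Rightarrow> real^'n) \<Rightarrow> bool" where
  "EL_solution a b \<alpha> L q \<longleftrightarrow>
     (\<exists>q'. (\<forall>t\<in>{a..b}. (q has_vector_derivative q' t) (at t within {a..b})) \<and> continuous_on {a..b} q') \<and>
     (\<forall>t\<in>{a..b}.
        along grad3 L a b \<alpha> q differentiable (at t within {a..b}) \<and>
        rl_int_right b (1 - \<alpha>) (along grad4 L a b \<alpha> q) differentiable (at t within {a..b}) \<and>
        along grad2 L a b \<alpha> q t - ddt a b (along grad3 L a b \<alpha> q) t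
          + rl_right_deriv a b \<alpha> (along grad4 L a b \<alpha> q) t = 0)"

end

theory Submission
  imports Defs
begin

text \<open>
  Along a solution q, invariance of the action on every interval [a, x] and continuity of the
  integrands make L(t, psi eps (q t), (psi eps o q)' t, D^alpha (psi eps o q) t) independent of eps
  at every t. Differentiating at eps = 0 gives d2 L . f2 + d3 L . f2' + d4 L . D^alpha f2 = 0, and
  eliminating d2 L with the Euler-Lagrange equation gives the identity. The analytic work lies in
  differentiating in eps under the weakly singular Caputo integral and in exchanging d/d eps with
  d/dt, which is Schwarz's theorem for the flow.
\<close>

section \<open>Real and Cartesian calculus\<close>

lemma has_vector_derivative_at_shift:
  fixes F :: "real \<Rightarrow> 'b::real_normed_vector"
  assumes "((\<lambda>k. F (c + k)) has_vector_derivative D) (at 0)"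
  shows "(F has_vector_derivative D) (at c)"
proof -
  have "((\<lambda>z. z - c) has_vector_derivative 1) (at c)"
    by (auto intro!: derivative_eq_intros)
  then have "(((\<lambda>k. F (c + k)) \<circ> (\<lambda>z. z - c)) has_vector_derivative (1 *\<^sub>R D)) (at c)"
    by (rule vector_diff_chain_at) (use assms in simp)
  then show ?thesis by (simp add: o_def)
qed

lemma norm_linearization_segment_le:
  fixes F :: "real \<Rightarrow> 'b::real_normed_vector"
  assumes der: "\<And>\<sigma>. \<sigma> \<in> closed_segment 0 h \<Longrightarrow>
      (F has_vector_derivative F' \<sigma>) (at \<sigma> within closed_segment 0 h)"
    and bound: "\<And>\<sigma>. \<sigma> \<in> closed_segment 0 h \<Longrightarrow> norm (F' \<sigma> - c) \<le> B"
  shows "norm (F h - F 0 - h *\<^sub>R c) \<le> B * \<bar>h\<bar>"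
proof -
  have "norm ((F h - h *\<^sub>R c) - (F 0 - 0 *\<^sub>R c)) \<le> B * norm (h - 0)"
  proof (rule differentiable_bound[of "closed_segment 0 h" _ "\<lambda>\<sigma> k. k *\<^sub>R (F' \<sigma> - c)"])
    show "((\<lambda>\<sigma>. F \<sigma> - \<sigma> *\<^sub>R c) has_derivative (\<lambda>k. k *\<^sub>R (F' \<sigma> - c))) (at \<sigma> within closed_segment 0 h)"
      if "\<sigma> \<in> closed_segment 0 h" for \<sigma>
    proof -
      have "((\<lambda>\<sigma>. \<sigma> *\<^sub>R c) has_vector_derivative c) (at \<sigma> within closed_segment 0 h)"
        using has_vector_derivative_scaleR[OF DERIV_ident has_vector_derivative_const[of c]] by simp
      from has_vector_derivative_diff[OF der[OF that] this] show ?thesis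
        by (simp add: has_vector_derivative_def scaleR_diff_right)
    qed
    show "onorm (\<lambda>k. k *\<^sub>R (F' \<sigma> - c)) \<le> B" if "\<sigma> \<in> closed_segment 0 h" for \<sigma>
      using bound[OF that] by (intro onorm_le) (simp add: mult.commute[of B] mult_left_mono[OF _ abs_ge_zero])
  qed (auto simp: convex_closed_segment)
  then show ?thesis by (simp add: algebra_simps)
qed

lemma second_difference_bound:
  fixes \<phi> :: "real \<Rightarrow> real \<Rightarrow> 'b::real_normed_vector"
  assumes P: "\<And>u v. ((\<lambda>k. \<phi> (u + k) v) has_vector_derivative P u v) (at 0)"
    and PQ: "\<And>u v. ((\<lambda>k. P u (v + k)) has_vector_derivative PQ u v) (at 0)"
    and "0 \<le> h"
    and near: "\<And>u v. u \<in> {0..h} \<Longrightarrow> v \<in> {0..h} \<Longrightarrow> norm (PQ u v - PQ 0 0) \<le> e"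
  shows "norm (\<phi> h h - \<phi> h 0 - \<phi> 0 h + \<phi> 0 0 - (h * h) *\<^sub>R PQ 0 0) \<le> h * h * e"
proof -
  have seg: "closed_segment 0 h = {0..h}"
    using \<open>0 \<le> h\<close> by (simp add: closed_segment_eq_real_ivl)
  have dP: "(P \<sigma> has_vector_derivative PQ \<sigma> \<tau>) (at \<tau>)" for \<sigma> \<tau>
    by (rule has_vector_derivative_at_shift) (rule PQ)
  have d\<phi>: "((\<lambda>\<sigma>. \<phi> \<sigma> h - \<phi> \<sigma> 0) has_vector_derivative P \<sigma> h - P \<sigma> 0) (at \<sigma>)" for \<sigma>
    by (intro has_vector_derivative_diff) (rule has_vector_derivative_at_shift, rule P)+
  have inner: "norm (P \<sigma> h - P \<sigma> 0 - h *\<^sub>R PQ 0 0) \<le> e * h" if "\<sigma> \<in> {0..h}" for \<sigma>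
    using norm_linearization_segment_le[of h "P \<sigma>" "PQ \<sigma>" "PQ 0 0" e] near[OF that] \<open>0 \<le> h\<close>
    by (simp add: seg has_vector_derivative_at_within[OF dP])
  have "norm ((\<phi> h h - \<phi> h 0) - (\<phi> 0 h - \<phi> 0 0) - h *\<^sub>R (h *\<^sub>R PQ 0 0)) \<le> (e * h) * \<bar>h\<bar>"
    by (rule norm_linearization_segment_le[where F'="\<lambda>\<sigma>. P \<sigma> h - P \<sigma> 0"])
      (auto simp: seg inner has_vector_derivative_at_within[OF d\<phi>])
  then show ?thesis
    using \<open>0 \<le> h\<close> by (simp add: algebra_simps)
qed

lemma mixed_partials_commute:
  fixes \<phi> :: "real \<Rightarrow> real \<Rightarrow> 'b::real_normed_vector"
  assumes P: "\<And>u v. ((\<lambda>k. \<phi> (u + k) v) has_vector_derivative P u v) (at 0)"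
    and Q: "\<And>u v. ((\<lambda>k. \<phi> u (v + k)) has_vector_derivative Q u v) (at 0)"
    and PQ: "\<And>u v. ((\<lambda>k. P u (v + k)) has_vector_derivative PQ u v) (at 0)"
    and QP: "\<And>u v. ((\<lambda>k. Q (u + k) v) has_vector_derivative QP u v) (at 0)"
    and cont_PQ: "continuous (at (0, 0)) (\<lambda>(u, v). PQ u v)"
    and cont_QP: "continuous (at (0, 0)) (\<lambda>(u, v). QP u v)"
  shows "PQ 0 0 = QP 0 0"
proof -
  have "norm (PQ 0 0 - QP 0 0) \<le> 0 + e" if "e > 0" for e
  proof -
    obtain d where "d > 0" and d: "\<And>u v. dist (u, v) (0, 0) < d \<Longrightarrow>
        norm (PQ u v - PQ 0 0) \<le> e / 2 \<and> norm (QP u v - QP 0 0) \<le> e / 2"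
    proof -
      obtain d1 where "d1 > 0" "\<And>z. dist z (0, 0) < d1 \<Longrightarrow> dist ((\<lambda>(u, v). PQ u v) z) (PQ 0 0) < e / 2"
        using cont_PQ \<open>e > 0\<close> unfolding continuous_at_eps_delta by (metis half_gt_zero case_prod_conv)
      moreover obtain d2 where "d2 > 0" "\<And>z. dist z (0, 0) < d2 \<Longrightarrow> dist ((\<lambda>(u, v). QP u v) z) (QP 0 0) < e / 2"
        using cont_QP \<open>e > 0\<close> unfolding continuous_at_eps_delta by (metis half_gt_zero case_prod_conv)
      ultimately show ?thesis
        by (intro that[of "min d1 d2"]) (auto simp: dist_norm less_imp_le)
    qed
    define h where "h = d / 4"
    have "h > 0" using \<open>d > 0\<close> by (simp add: h_def)
    have small: "dist (u, v) (0, 0) < d" if "u \<in> {0..h}" "v \<in> {0..h}" for u v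
    proof -
      have "dist (u, v) (0, 0) \<le> \<bar>u\<bar> + \<bar>v\<bar>"
        using norm_Pair_le[of u v] by (simp add: dist_norm)
      also have "\<dots> < d" using that \<open>d > 0\<close> by (auto simp: h_def)
      finally show ?thesis .
    qed
    \<comment> \<open>both mixed partials are the limit of the same second difference divided by h^2\<close>
    define X where "X = \<phi> h h - \<phi> h 0 - \<phi> 0 h + \<phi> 0 0"
    have "norm (X - (h * h) *\<^sub>R PQ 0 0) \<le> h * h * (e / 2)"
      unfolding X_def by (rule second_difference_bound[OF P PQ]) (use \<open>h > 0\<close> d small in auto)
    moreover have "norm (X - (h * h) *\<^sub>R QP 0 0) \<le> h * h * (e / 2)"
      using second_difference_bound[where \<phi>="\<lambda>u v. \<phi> v u", OF Q QP, of h "e / 2"] \<open>h > 0\<close> d small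
      by (auto simp: X_def algebra_simps)
    ultimately have "norm ((h * h) *\<^sub>R (PQ 0 0 - QP 0 0)) \<le> h * h * e"
      using norm_triangle_ineq4[of "X - (h * h) *\<^sub>R QP 0 0" "X - (h * h) *\<^sub>R PQ 0 0"]
      by (simp add: algebra_simps)
    then show ?thesis using \<open>h > 0\<close> by simp
  qed
  then show ?thesis
    using field_le_epsilon[of "norm (PQ 0 0 - QP 0 0)" 0] by simp
qed

text \<open>Differentiability from continuous partials is proved by switching on one coordinate
  direction at a time.\<close>

definition restrict_coords :: "'n set \<Rightarrow> real^'n \<Rightarrow> real^'n" where
  "restrict_coords J h = (\<chi> i. if i \<in> J then h$i else 0)"

lemma norm_restrict_coords_le: "norm (restrict_coords J h) \<le> norm h"
  by (rule norm_le_componentwise_cart) (simp add: restrict_coords_def)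

lemma restrict_coords_empty [simp]: "restrict_coords {} h = 0"
  by (simp add: restrict_coords_def vec_eq_iff)

lemma restrict_coords_UNIV [simp]: "restrict_coords UNIV h = h"
  by (simp add: restrict_coords_def vec_eq_iff)

lemma restrict_coords_insert:
  "j \<notin> J \<Longrightarrow> restrict_coords (insert j J) h = restrict_coords J h + h$j *\<^sub>R axis j 1"
  by (auto simp: restrict_coords_def vec_eq_iff axis_def)

lemma linearization_along_axis:
  fixes f :: "real^'n \<Rightarrow> 'b::real_normed_vector"
  assumes der: "\<And>y. ((\<lambda>k. f (y + k *\<^sub>R axis j 1)) has_vector_derivative g y) (at 0)"
    and cont: "continuous (at x) g" and "e > 0"
  obtains d where "d > 0"
    "\<And>y \<tau>. norm (y - x) + \<bar>\<tau>\<bar> < d \<Longrightarrow> norm (f (y + \<tau> *\<^sub>R axis j 1) - f y - \<tau> *\<^sub>R g x) \<le> e * \<bar>\<tau>\<bar>"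
proof -
  obtain d where "d > 0" and d: "\<And>z. dist z x < d \<Longrightarrow> dist (g z) (g x) < e"
    using cont \<open>e > 0\<close> unfolding continuous_at_eps_delta by blast
  have "norm (f (y + \<tau> *\<^sub>R axis j 1) - f y - \<tau> *\<^sub>R g x) \<le> e * \<bar>\<tau>\<bar>"
    if close: "norm (y - x) + \<bar>\<tau>\<bar> < d" for y \<tau>
  proof -
    have "norm ((\<lambda>\<sigma>. f (y + \<sigma> *\<^sub>R axis j 1)) \<tau> - (\<lambda>\<sigma>. f (y + \<sigma> *\<^sub>R axis j 1)) 0 - \<tau> *\<^sub>R g x)
        \<le> e * \<bar>\<tau>\<bar>"
    proof (rule norm_linearization_segment_le)
      fix \<sigma> assume \<sigma>: "\<sigma> \<in> closed_segment 0 \<tau>"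
      have "((\<lambda>k. f (y + (\<sigma> + k) *\<^sub>R axis j 1)) has_vector_derivative g (y + \<sigma> *\<^sub>R axis j 1)) (at 0)"
        using der[of "y + \<sigma> *\<^sub>R axis j 1"] by (simp add: scaleR_add_left add.assoc)
      from has_vector_derivative_at_shift[where F="\<lambda>\<sigma>. f (y + \<sigma> *\<^sub>R axis j 1)", OF this]
      show "((\<lambda>\<sigma>. f (y + \<sigma> *\<^sub>R axis j 1)) has_vector_derivative g (y + \<sigma> *\<^sub>R axis j 1))
          (at \<sigma> within closed_segment 0 \<tau>)"
        by (rule has_vector_derivative_at_within)
      have "\<bar>\<sigma>\<bar> \<le> \<bar>\<tau>\<bar>"
        using \<sigma> by (auto simp: closed_segment_eq_real_ivl split: if_splits)
      then have "norm (y - x + \<sigma> *\<^sub>R axis j 1) < d"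
        using close norm_triangle_ineq[of "y - x" "\<sigma> *\<^sub>R axis j 1"] by simp
      then show "norm (g (y + \<sigma> *\<^sub>R axis j 1) - g x) \<le> e"
        using d[of "y + \<sigma> *\<^sub>R axis j 1"] by (simp add: dist_norm algebra_simps)
    qed
    then show ?thesis by simp
  qed
  with \<open>d > 0\<close> show ?thesis using that by blast
qed

lemma linearization_restrict_coords:
  fixes f :: "real^'n \<Rightarrow> 'b::real_normed_vector"
  assumes der: "\<And>i y. ((\<lambda>k. f (y + k *\<^sub>R axis i 1)) has_vector_derivative g i y) (at 0)"
    and cont: "\<And>i. continuous (at x) (g i)" and "finite J" and "e > 0"
  shows "\<exists>d>0. \<forall>h. norm h < d \<longrightarrow>
    norm (f (x + restrict_coords J h) - f x - (\<Sum>i\<in>J. h$i *\<^sub>R g i x)) \<le> e * norm h"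
  using \<open>finite J\<close> \<open>e > 0\<close>
proof (induction J arbitrary: e rule: finite_induct)
  case empty
  then show ?case by (auto intro!: exI[of _ 1])
next
  case (insert j J)
  obtain d1 where "d1 > 0" and d1: "\<And>h. norm h < d1 \<Longrightarrow>
      norm (f (x + restrict_coords J h) - f x - (\<Sum>i\<in>J. h$i *\<^sub>R g i x)) \<le> e / 2 * norm h"
    using insert.IH[of "e / 2"] \<open>e > 0\<close> by auto
  obtain d2 where "d2 > 0" and d2: "\<And>y \<tau>. norm (y - x) + \<bar>\<tau>\<bar> < d2 \<Longrightarrow>
      norm (f (y + \<tau> *\<^sub>R axis j 1) - f y - \<tau> *\<^sub>R g j x) \<le> e / 2 * \<bar>\<tau>\<bar>"
    using linearization_along_axis[OF der cont, of "e / 2"] \<open>e > 0\<close> by auto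
  have "norm (f (x + restrict_coords (insert j J) h) - f x - (\<Sum>i\<in>insert j J. h$i *\<^sub>R g i x))
      \<le> e * norm h" if h: "norm h < min d1 (d2 / 2)" for h
  proof -
    define y where "y = x + restrict_coords J h"
    have hj: "\<bar>h$j\<bar> \<le> norm h" by (rule component_le_norm_cart)
    have "norm (y - x) + \<bar>h$j\<bar> < d2"
      using h hj norm_restrict_coords_le[of J h] by (simp add: y_def)
    then have "norm (f (y + h$j *\<^sub>R axis j 1) - f y - h$j *\<^sub>R g j x) \<le> e / 2 * \<bar>h$j\<bar>"
      by (rule d2)
    also have "\<dots> \<le> e / 2 * norm h"
      using hj \<open>e > 0\<close> by simp
    finally have step: "norm (f (y + h$j *\<^sub>R axis j 1) - f y - h$j *\<^sub>R g j x) \<le> e / 2 * norm h" .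
    have IH: "norm (f y - f x - (\<Sum>i\<in>J. h$i *\<^sub>R g i x)) \<le> e / 2 * norm h"
      using d1 h by (simp add: y_def)
    have "x + restrict_coords (insert j J) h = y + h$j *\<^sub>R axis j 1"
      using insert.hyps(2) by (simp add: y_def restrict_coords_insert add.assoc)
    then have "f (x + restrict_coords (insert j J) h) - f x - (\<Sum>i\<in>insert j J. h$i *\<^sub>R g i x)
        = (f (y + h$j *\<^sub>R axis j 1) - f y - h$j *\<^sub>R g j x) + (f y - f x - (\<Sum>i\<in>J. h$i *\<^sub>R g i x))"
      using insert.hyps by simp
    then have "norm (f (x + restrict_coords (insert j J) h) - f x - (\<Sum>i\<in>insert j J. h$i *\<^sub>R g i x))
        \<le> norm (f (y + h$j *\<^sub>R axis j 1) - f y - h$j *\<^sub>R g j x) + norm (f y - f x - (\<Sum>i\<in>J. h$i *\<^sub>R g i x))"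
      by (simp only: norm_triangle_ineq)
    with step IH show ?thesis by linarith
  qed
  then show ?case
    using \<open>d1 > 0\<close> \<open>d2 > 0\<close> by (intro exI[of _ "min d1 (d2 / 2)"]) auto
qed

lemma has_derivative_continuous_partials_cart:
  fixes f :: "real^'n \<Rightarrow> 'b::real_normed_vector"
  assumes der: "\<And>i y. ((\<lambda>k. f (y + k *\<^sub>R axis i 1)) has_vector_derivative g i y) (at 0)"
    and cont: "\<And>i. continuous (at x) (g i)"
  shows "(f has_derivative (\<lambda>h. \<Sum>i\<in>UNIV. h$i *\<^sub>R g i x)) (at x)"
  unfolding has_derivative_at_alt
proof (intro conjI allI impI)
  show "bounded_linear (\<lambda>h. \<Sum>i\<in>UNIV. h$i *\<^sub>R g i x)"
    unfolding linear_conv_bounded_linear[symmetric]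
    by (rule linearI) (simp_all add: scaleR_add_left sum.distrib scaleR_sum_right)
  fix e :: real assume "e > 0"
  then obtain d where "d > 0" and d: "\<And>h. norm h < d \<Longrightarrow>
      norm (f (x + h) - f x - (\<Sum>i\<in>UNIV. h$i *\<^sub>R g i x)) \<le> e * norm h"
    using linearization_restrict_coords[OF der cont, of UNIV e] by auto
  show "\<exists>d>0. \<forall>y. norm (y - x) < d \<longrightarrow>
      norm (f y - f x - (\<Sum>i\<in>UNIV. (y - x)$i *\<^sub>R g i x)) \<le> e * norm (y - x)"
    using d[of "y - x" for y] \<open>d > 0\<close> by (metis add.commute diff_add_cancel)
qed

lemma ddt_eq:
  fixes f :: "real \<Rightarrow> 'a::real_normed_vector"
  assumes "a < b" "t \<in> {a..b}" "(f has_vector_derivative f') (at t within {a..b})"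
  shows "ddt a b f t = f'"
  using vector_derivative_within_cbox[of a b t f f'] assms by (simp add: ddt_def)

lemma continuous_eq_if_integrals_eq:
  fixes f g :: "real \<Rightarrow> 'a::banach"
  assumes "a < b" "continuous_on {a..b} f" "continuous_on {a..b} g"
    and eq: "\<And>x. x \<in> {a..b} \<Longrightarrow> integral {a..x} f = integral {a..x} g"
    and t: "t \<in> {a..b}"
  shows "f t = g t"
proof (rule vector_derivative_unique_within)
  show "at t within {a..b} \<noteq> bot"
    using assms(1) t by (simp add: trivial_limit_within)
  show "((\<lambda>x. integral {a..x} g) has_vector_derivative f t) (at t within {a..b})"
    by (rule has_vector_derivative_transform[OF t _ integral_has_vector_derivative[OF assms(2) t]])
      (simp add: eq)
  show "((\<lambda>x. integral {a..x} g) has_vector_derivative g t) (at t within {a..b})"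
    by (rule integral_has_vector_derivative[OF assms(3) t])
qed

lemma derivative_zero_if_constant_along_curve:
  assumes F: "(F has_derivative F') (at (\<gamma> 0) within S)"
    and \<gamma>: "(\<gamma> has_vector_derivative v) (at 0)" "\<And>\<epsilon>. \<gamma> \<epsilon> \<in> S"
    and const: "\<And>\<epsilon>. F (\<gamma> \<epsilon>) = F (\<gamma> 0)"
  shows "F' v = 0"
proof -
  have "((\<lambda>\<epsilon>. F (\<gamma> \<epsilon>)) has_derivative (\<lambda>h. F' (h *\<^sub>R v))) (at 0)"
  proof (rule has_derivative_in_compose[where s=UNIV and f=\<gamma> and f'="\<lambda>h. h *\<^sub>R v"])
    show "(\<gamma> has_derivative (\<lambda>h. h *\<^sub>R v)) (at 0)"
      using \<gamma>(1) by (simp add: has_vector_derivative_def)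
    show "(F has_derivative F') (at (\<gamma> 0) within range \<gamma>)"
      by (rule has_derivative_subset[OF F]) (use \<gamma>(2) in auto)
  qed
  moreover have "((\<lambda>\<epsilon>. F (\<gamma> \<epsilon>)) has_derivative (\<lambda>h. 0)) (at 0)"
    by (rule has_derivative_transform[OF UNIV_I _ has_derivative_const]) (rule const)
  ultimately have "(\<lambda>h. F' (h *\<^sub>R v)) = (\<lambda>h. 0)"
    by (rule has_derivative_unique)
  from fun_cong[OF this, of 1] show ?thesis
    by simp
qed

lemma deriv_along_line_eq_derivative:
  fixes L :: "real \<times> 'a::real_normed_vector \<Rightarrow> real"
  assumes der: "(L has_derivative blinfun_apply D) (at p within ({a..b} \<times> UNIV))"
    and "fst p \<in> {a..b}" "fst v = 0"
  shows "deriv (\<lambda>h. L (p + h *\<^sub>R v)) 0 = blinfun_apply D v"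
proof -
  have line: "((\<lambda>h. p + h *\<^sub>R v) has_derivative (\<lambda>h. h *\<^sub>R v)) (at 0)"
    by (auto intro!: derivative_eq_intros)
  have "range (\<lambda>h. p + h *\<^sub>R v) \<subseteq> {a..b} \<times> UNIV"
    using assms(2,3) by (intro image_subsetI) (simp add: mem_Times_iff)
  then have "((\<lambda>h. L (p + h *\<^sub>R v)) has_derivative (\<lambda>h. blinfun_apply D (h *\<^sub>R v))) (at 0)"
    using has_derivative_subset[OF der] by (intro has_derivative_in_compose[OF line]) simp
  then have "((\<lambda>h. L (p + h *\<^sub>R v)) has_field_derivative blinfun_apply D v) (at 0)"
    by (simp add: has_field_derivative_def blinfun.scaleR_right mult.commute[of _ "blinfun_apply D v"])
  then show ?thesis
    by (rule DERIV_imp_deriv)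
qed

lemma linear_eq_inner_axis:
  fixes l :: "real^'n \<Rightarrow> real"
  assumes "linear l"
  shows "l y = (\<chi> i. l (axis i 1)) \<bullet> y"
proof -
  have "l y = l (\<Sum>i\<in>UNIV. y$i *\<^sub>R axis i 1)"
    using basis_expansion[of y] by (simp add: scalar_mult_eq_scaleR)
  also have "\<dots> = (\<chi> i. l (axis i 1)) \<bullet> y"
    using assms by (simp add: linear_sum linear_scale inner_vec_def mult.commute)
  finally show ?thesis .
qed

lemma derivative_eq_inner_grads:
  fixes L :: "real \<Rightarrow> real^'n \<Rightarrow> real^'n \<Rightarrow> real^'n \<Rightarrow> real"
  assumes der: "((\<lambda>(t, x, v, w). L t x v w) has_derivative blinfun_apply D)
      (at (t, x, v, w) within ({a..b} \<times> UNIV))"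
    and "t \<in> {a..b}"
  shows "blinfun_apply D (0, dx, dv, dw)
       = grad2 L t x v w \<bullet> dx + grad3 L t x v w \<bullet> dv + grad4 L t x v w \<bullet> dw"
proof -
  have partial: "deriv (\<lambda>h. L t (x + h *\<^sub>R dx') (v + h *\<^sub>R dv') (w + h *\<^sub>R dw')) 0
      = blinfun_apply D (0, dx', dv', dw')" for dx' dv' dw'
    using deriv_along_line_eq_derivative[OF der, of "(0, dx', dv', dw')"] \<open>t \<in> {a..b}\<close> by simp
  have grads: "grad2 L t x v w = (\<chi> i. blinfun_apply D (0, axis i 1, 0, 0))"
    "grad3 L t x v w = (\<chi> i. blinfun_apply D (0, 0, axis i 1, 0))"
    "grad4 L t x v w = (\<chi> i. blinfun_apply D (0, 0, 0, axis i 1))"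
    using partial[of "axis _ 1" 0 0] partial[of 0 "axis _ 1" 0] partial[of 0 0 "axis _ 1"]
    by (simp_all add: grad2_def grad3_def grad4_def)
  have lin: "linear (\<lambda>y. blinfun_apply D (f y))" if "linear f" for f :: "real^'n \<Rightarrow> _"
    using linear_compose[OF that bounded_linear.linear[OF blinfun.bounded_linear_right]]
    by (simp add: o_def)
  have "linear (\<lambda>y::real^'n. (0::real, y, 0::real^'n, 0::real^'n))"
    "linear (\<lambda>y::real^'n. (0::real, 0::real^'n, y, 0::real^'n))"
    "linear (\<lambda>y::real^'n. (0::real, 0::real^'n, 0::real^'n, y))"
    by (auto intro!: linearI)
  note lins = this[THEN lin]
  have "blinfun_apply D (0, dx, dv, dw)
      = blinfun_apply D (0, dx, 0, 0) + blinfun_apply D (0, 0, dv, 0) + blinfun_apply D (0, 0, 0, dw)"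
    by (simp add: blinfun.add_right[symmetric])
  also have "\<dots> = grad2 L t x v w \<bullet> dx + grad3 L t x v w \<bullet> dv + grad4 L t x v w \<bullet> dw"
    unfolding grads
    by (subst linear_eq_inner_axis[OF lins(1)], subst linear_eq_inner_axis[OF lins(2)],
        subst linear_eq_inner_axis[OF lins(3)]) simp
  finally show ?thesis .
qed

section \<open>The Caputo derivative as an integral operator\<close>

definition caputo_kernel :: "real \<Rightarrow> real \<Rightarrow> real" where
  "caputo_kernel \<alpha> u = u powr (- \<alpha>) / Gamma (1 - \<alpha>)"

text \<open>caputo_left a alpha f is caputo_integral a alpha f' (caputo_left_eq_caputo_integral); with the
  derivative passed explicitly the operator is linear and can be differentiated in a parameter.\<close>

definition caputo_integral :: "real \<Rightarrow> real \<Rightarrow> (real \<Rightarrow> 'a::euclidean_space) \<Rightarrow> real \<Rightarrow> 'a" where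
  "caputo_integral a \<alpha> g t = integral {a..t} (\<lambda>s. caputo_kernel \<alpha> (t - s) *\<^sub>R g s)"

lemma caputo_kernel_nonneg: "\<alpha> < 1 \<Longrightarrow> 0 \<le> caputo_kernel \<alpha> u"
  by (simp add: caputo_kernel_def)

lemma caputo_kernel_has_integral:
  assumes "0 < \<alpha>" "\<alpha> < 1" "0 \<le> c"
  shows "(caputo_kernel \<alpha> has_integral c powr (1 - \<alpha>) / (1 - \<alpha>) / Gamma (1 - \<alpha>)) {0..c}"
proof -
  have "((\<lambda>u. u powr (- \<alpha>)) has_integral c powr (- \<alpha> + 1) / (- \<alpha> + 1)) {0..c}"
    using has_integral_powr_from_0[of "- \<alpha>" c] assms by simp
  from has_integral_divide[OF this, of "Gamma (1 - \<alpha>)"] show ?thesis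
    by (simp add: caputo_kernel_def[abs_def] add.commute)
qed

lemma caputo_kernel_scaleR_absolutely_integrable:
  fixes g :: "real \<Rightarrow> 'a::euclidean_space"
  assumes "0 < \<alpha>" "\<alpha> < 1" "0 \<le> c" "continuous_on {0..c} g"
  shows "(\<lambda>u. caputo_kernel \<alpha> u *\<^sub>R g u) absolutely_integrable_on {0..c}"
proof -
  have "bilinear (\<lambda>(v::'a) (r::real). r *\<^sub>R v)"
    unfolding bilinear_def by (auto intro!: linearI simp: scaleR_add_left scaleR_add_right)
  then have "(\<lambda>u. (\<lambda>v r. r *\<^sub>R v) (g u) (caputo_kernel \<alpha> u)) absolutely_integrable_on {0..c}"
  proof (rule absolutely_integrable_bounded_measurable_product)
    show "g \<in> borel_measurable (lebesgue_on {0..c})"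
      by (rule continuous_imp_measurable_on_sets_lebesgue) (use assms in auto)
    show "bounded (g ` {0..c})"
      using assms(4) by (simp add: compact_continuous_image compact_imp_bounded)
    show "caputo_kernel \<alpha> absolutely_integrable_on {0..c}"
      using caputo_kernel_has_integral[OF assms(1-3)] caputo_kernel_nonneg[OF assms(2)]
      by (intro nonnegative_absolutely_integrable_1) blast+
  qed auto
  then show ?thesis by simp
qed

lemma has_integral_reflect_shift:
  fixes f :: "real \<Rightarrow> 'a::euclidean_space"
  assumes "a \<le> t" "(f has_integral I) {0..t - a}"
  shows "((\<lambda>s. f (t - s)) has_integral I) {a..t}"
proof -
  have "((\<lambda>x. f ((-1) *\<^sub>R x + t)) has_integral (1 / (\<bar>-1\<bar> ^ DIM(real))) *\<^sub>R I)
     ((\<lambda>x. (1 / (-1)) *\<^sub>R x + -((1 / (-1)) *\<^sub>R t)) ` cbox 0 (t - a))"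
    by (rule has_integral_affinity) (use assms in auto)
  moreover have "(\<lambda>x. (1 / (-1)) *\<^sub>R x + -((1 / (-1)) *\<^sub>R t)) ` cbox 0 (t - a) = {a..t}"
    using assms by (auto simp: image_iff)
  ultimately show ?thesis by simp
qed

lemma caputo_integral_reflected:
  fixes g :: "real \<Rightarrow> 'a::euclidean_space"
  assumes "0 < \<alpha>" "\<alpha> < 1" "a \<le> t" "continuous_on {a..t} g"
  shows "((\<lambda>s. caputo_kernel \<alpha> (t - s) *\<^sub>R g s) has_integral
           integral {0..t - a} (\<lambda>u. caputo_kernel \<alpha> u *\<^sub>R g (t - u))) {a..t}"
    and "caputo_integral a \<alpha> g t = integral {0..t - a} (\<lambda>u. caputo_kernel \<alpha> u *\<^sub>R g (t - u))"
proof -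
  have "continuous_on {0..t - a} (\<lambda>u. g (t - u))"
    by (rule continuous_on_compose2[OF assms(4)]) (auto intro!: continuous_intros)
  then have "(\<lambda>u. caputo_kernel \<alpha> u *\<^sub>R g (t - u)) integrable_on {0..t - a}"
    using caputo_kernel_scaleR_absolutely_integrable[of \<alpha> "t - a" "\<lambda>u. g (t - u)"] assms
    by (simp add: absolutely_integrable_on_def)
  from has_integral_reflect_shift[OF assms(3) integrable_integral[OF this]]
  show *: "((\<lambda>s. caputo_kernel \<alpha> (t - s) *\<^sub>R g s) has_integral
           integral {0..t - a} (\<lambda>u. caputo_kernel \<alpha> u *\<^sub>R g (t - u))) {a..t}"
    by simp
  then show "caputo_integral a \<alpha> g t = integral {0..t - a} (\<lambda>u. caputo_kernel \<alpha> u *\<^sub>R g (t - u))"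
    unfolding caputo_integral_def by (rule integral_unique)
qed

lemma caputo_integrand_integrable:
  fixes g :: "real \<Rightarrow> 'a::euclidean_space"
  assumes "0 < \<alpha>" "\<alpha> < 1" "a \<le> t" "continuous_on {a..t} g"
  shows "(\<lambda>s. caputo_kernel \<alpha> (t - s) *\<^sub>R g s) integrable_on {a..t}"
  using caputo_integral_reflected(1)[OF assms] by blast

lemma norm_caputo_integral_le:
  fixes g :: "real \<Rightarrow> 'a::euclidean_space"
  assumes "0 < \<alpha>" "\<alpha> < 1" "a \<le> t" "continuous_on {a..t} g"
    and bound: "\<And>s. s \<in> {a..t} \<Longrightarrow> norm (g s) \<le> M"
  shows "norm (caputo_integral a \<alpha> g t) \<le> M * ((t - a) powr (1 - \<alpha>) / (1 - \<alpha>) / Gamma (1 - \<alpha>))"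
proof -
  have majorant: "((\<lambda>s. M * caputo_kernel \<alpha> (t - s)) has_integral
      M * ((t - a) powr (1 - \<alpha>) / (1 - \<alpha>) / Gamma (1 - \<alpha>))) {a..t}"
    using assms(1-3)
    by (intro has_integral_reflect_shift[where f="\<lambda>u. M * caputo_kernel \<alpha> u"]
        has_integral_mult_right caputo_kernel_has_integral) auto
  have "norm (caputo_integral a \<alpha> g t) \<le> integral {a..t} (\<lambda>s. M * caputo_kernel \<alpha> (t - s))"
    unfolding caputo_integral_def
  proof (rule integral_norm_bound_integral)
    show "(\<lambda>s. caputo_kernel \<alpha> (t - s) *\<^sub>R g s) integrable_on {a..t}"
      by (rule caputo_integrand_integrable[OF assms(1-4)])
    show "(\<lambda>s. M * caputo_kernel \<alpha> (t - s)) integrable_on {a..t}"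
      using majorant by blast
    show "norm (caputo_kernel \<alpha> (t - s) *\<^sub>R g s) \<le> M * caputo_kernel \<alpha> (t - s)" if "s \<in> {a..t}" for s
      using mult_left_mono[OF bound[OF that] caputo_kernel_nonneg[OF assms(2), of "t - s"]]
      by (simp add: caputo_kernel_nonneg[OF assms(2)] mult.commute)
  qed
  also have "\<dots> = M * ((t - a) powr (1 - \<alpha>) / (1 - \<alpha>) / Gamma (1 - \<alpha>))"
    using majorant by (rule integral_unique)
  finally show ?thesis .
qed

lemma caputo_integral_diff:
  fixes g1 g2 :: "real \<Rightarrow> 'a::euclidean_space"
  assumes "0 < \<alpha>" "\<alpha> < 1" "a \<le> t" "continuous_on {a..t} g1" "continuous_on {a..t} g2"
  shows "caputo_integral a \<alpha> (\<lambda>s. g1 s - g2 s) t = caputo_integral a \<alpha> g1 t - caputo_integral a \<alpha> g2 t"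
  unfolding caputo_integral_def scaleR_diff_right
  by (rule integral_diff[OF caputo_integrand_integrable[OF assms(1-4)]
        caputo_integrand_integrable[OF assms(1-3,5)]])

lemma caputo_integral_scaleR:
  "caputo_integral a \<alpha> (\<lambda>s. c *\<^sub>R g s) t = c *\<^sub>R caputo_integral a \<alpha> g t"
  unfolding caputo_integral_def by (simp only: scaleR_left_commute[of _ c] integral_cmul)

lemma caputo_integral_cong:
  "(\<And>s. s \<in> {a..t} \<Longrightarrow> g s = h s) \<Longrightarrow> caputo_integral a \<alpha> g t = caputo_integral a \<alpha> h t"
  unfolding caputo_integral_def by (rule integral_cong) simp

lemma caputo_left_eq_caputo_integral:
  fixes f g :: "real \<Rightarrow> 'a::euclidean_space"
  assumes f: "\<And>s. s \<in> {a..b} \<Longrightarrow> (f has_vector_derivative g s) (at s within {a..b})"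
    and "t \<in> {a..b}"
  shows "caputo_left a \<alpha> f t = caputo_integral a \<alpha> g t"
proof (cases "a < t")
  case True
  have "vector_derivative f (at s within {a..t}) = g s" if "s \<in> {a..t}" for s
    using vector_derivative_within_cbox[OF True, of s f "g s"] that \<open>t \<in> {a..b}\<close>
      has_vector_derivative_within_subset[OF f[of s], of "{a..t}"]
    by simp
  then show ?thesis
    unfolding caputo_left_def caputo_integral_def caputo_kernel_def by (intro integral_cong) simp
next
  case False
  then show ?thesis
    using \<open>t \<in> {a..b}\<close> by (simp add: caputo_left_def caputo_integral_def)
qed

lemma caputo_integral_truncated_has_integral:
  fixes g :: "real \<Rightarrow> 'a::euclidean_space"
  assumes "0 < \<alpha>" "\<alpha> < 1" "continuous_on UNIV g" "t \<in> {a..b}"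
  shows "((\<lambda>u. if u \<le> t - a then caputo_kernel \<alpha> u *\<^sub>R g (t - u) else 0) has_integral
           caputo_integral a \<alpha> g t) {0..b - a}"
proof -
  have "continuous_on {0..t - a} (\<lambda>u. g (t - u))"
    by (rule continuous_on_compose2[OF assms(3)]) (auto intro!: continuous_intros)
  then have "(\<lambda>u. caputo_kernel \<alpha> u *\<^sub>R g (t - u)) integrable_on {0..t - a}"
    using caputo_kernel_scaleR_absolutely_integrable[of \<alpha> "t - a" "\<lambda>u. g (t - u)"] assms
    by (simp add: absolutely_integrable_on_def)
  moreover have "caputo_integral a \<alpha> g t = integral {0..t - a} (\<lambda>u. caputo_kernel \<alpha> u *\<^sub>R g (t - u))"
    using assms by (intro caputo_integral_reflected(2)) (auto intro: continuous_on_subset)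
  ultimately have "((\<lambda>u. caputo_kernel \<alpha> u *\<^sub>R g (t - u)) has_integral caputo_integral a \<alpha> g t) {0..t - a}"
    by (simp add: integrable_integral)
  moreover have "{..t - a} \<inter> {0..b - a} = {0..t - a}"
    using assms(4) by auto
  ultimately have "((\<lambda>u. caputo_kernel \<alpha> u *\<^sub>R g (t - u)) has_integral caputo_integral a \<alpha> g t)
      ({..t - a} \<inter> {0..b - a})"
    by (simp only:)
  then show ?thesis
    by (subst (asm) has_integral_restrict_Int[symmetric]) simp
qed

lemma tendsto_truncated_shift:
  fixes g :: "real \<Rightarrow> 'a::real_normed_vector"
  assumes "continuous_on UNIV g" and lim: "u \<longlonglongrightarrow> t" and "x \<noteq> t - a"
  shows "(\<lambda>n. if x \<le> u n - a then c *\<^sub>R g (u n - x) else 0)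
           \<longlonglongrightarrow> (if x \<le> t - a then c *\<^sub>R g (t - x) else 0)"
proof (cases "x < t - a")
  case True
  then have "eventually (\<lambda>n. x < u n - a) sequentially"
    using order_tendstoD(1)[OF tendsto_diff[OF lim tendsto_const[of a]] True] by simp
  then have "eventually (\<lambda>n. c *\<^sub>R g (u n - x) = (if x \<le> u n - a then c *\<^sub>R g (u n - x) else 0))
      sequentially"
    by eventually_elim auto
  moreover have "(\<lambda>n. c *\<^sub>R g (u n - x)) \<longlonglongrightarrow> c *\<^sub>R g (t - x)"
    using assms(1) by (intro tendsto_intros isCont_tendsto_compose[where g=g] lim)
      (simp add: continuous_on_eq_continuous_at)
  ultimately show ?thesis
    using True by (simp add: Lim_transform_eventually)
next
  case False
  then have "x > t - a" using assms(3) by simp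
  then have "eventually (\<lambda>n. u n - a < x) sequentially"
    using order_tendstoD(2)[OF tendsto_diff[OF lim tendsto_const[of a]]] by simp
  then have "eventually (\<lambda>n. 0 = (if x \<le> u n - a then c *\<^sub>R g (u n - x) else 0)) sequentially"
    by eventually_elim auto
  then show ?thesis
    using \<open>x > t - a\<close> by (simp add: Lim_transform_eventually[OF tendsto_const])
qed

text \<open>After the substitution u = t - s the integrands live on the fixed interval [0, b - a], where
  they are dominated by a multiple of the integrable kernel and converge except at u = t - a.\<close>

lemma continuous_on_caputo_integral_UNIV:
  fixes g :: "real \<Rightarrow> 'a::euclidean_space"
  assumes "0 < \<alpha>" "\<alpha> < 1" "continuous_on UNIV g"
  shows "continuous_on {a..b} (caputo_integral a \<alpha> g)"
proof (rule continuous_on_sequentiallyI)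
  fix u :: "nat \<Rightarrow> real" and t
  assume u: "\<forall>n. u n \<in> {a..b}" and t: "t \<in> {a..b}" and lim: "u \<longlonglongrightarrow> t"
  define f where "f t u = (if u \<le> t - a then caputo_kernel \<alpha> u *\<^sub>R g (t - u) else 0)" for t u
  have f: "(f s has_integral caputo_integral a \<alpha> g s) {0..b - a}" if "s \<in> {a..b}" for s
    unfolding f_def by (rule caputo_integral_truncated_has_integral[OF assms that])
  have "bounded (g ` {a..b})"
    by (intro compact_imp_bounded compact_continuous_image continuous_on_subset[OF assms(3)]) auto
  then obtain M where "\<forall>y\<in>g ` {a..b}. norm y \<le> M"
    by (auto simp: bounded_iff)
  then have M: "\<And>s. s \<in> {a..b} \<Longrightarrow> norm (g s) \<le> M"
    by blast
  have "0 \<le> M"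
    using M[OF u[rule_format, of 0]] norm_ge_zero[of "g (u 0)"] by linarith
  define S where "S = {0..b - a} - {t - a}"
  have negl: "negligible {x \<in> {0..b - a} - S. h x \<noteq> 0}" "negligible {x \<in> S - {0..b - a}. h x \<noteq> 0}"
    for h :: "real \<Rightarrow> 'b::real_normed_vector"
    by (rule negligible_subset[of "{t - a}"]; auto simp: S_def)+
  have "(\<lambda>n. integral S (f (u n))) \<longlonglongrightarrow> integral S (f t)"
  proof (rule dominated_convergence(2))
    show "f (u n) integrable_on S" for n
      using f[OF u[rule_format]] by (blast intro: integrable_spike_set[OF _ negl])
    have "((\<lambda>x. M * caputo_kernel \<alpha> x) has_integral M * ((b - a) powr (1 - \<alpha>) / (1 - \<alpha>) / Gamma (1 - \<alpha>))) {0..b - a}"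
      using assms t by (intro has_integral_mult_right caputo_kernel_has_integral) auto
    then show "(\<lambda>x. M * caputo_kernel \<alpha> x) integrable_on S"
      by (blast intro: integrable_spike_set[OF _ negl])
    show "norm (f (u n) x) \<le> M * caputo_kernel \<alpha> x" if "x \<in> S" for n x
    proof (cases "x \<le> u n - a")
      case True
      then have "norm (g (u n - x)) \<le> M"
        using that u[rule_format, of n] by (intro M) (auto simp: S_def)
      then show ?thesis
        using True caputo_kernel_nonneg[OF assms(2), of x]
        by (simp add: f_def mult.commute[of M] mult_left_mono)
    next
      case False
      then show ?thesis
        using \<open>0 \<le> M\<close> caputo_kernel_nonneg[OF assms(2), of x] by (simp add: f_def)
    qed
    show "(\<lambda>n. f (u n) x) \<longlonglongrightarrow> f t x" if "x \<in> S" for x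
      unfolding f_def using that by (intro tendsto_truncated_shift assms(3) lim) (simp add: S_def)
  qed
  moreover have "integral S (f s) = caputo_integral a \<alpha> g s" if "s \<in> {a..b}" for s
    using integral_spike_set[OF negl, of "f s"] integral_unique[OF f[OF that]] by simp
  ultimately show "(\<lambda>n. caputo_integral a \<alpha> g (u n)) \<longlonglongrightarrow> caputo_integral a \<alpha> g t"
    using u t by simp
qed

lemma continuous_on_caputo_integral:
  fixes g :: "real \<Rightarrow> 'a::euclidean_space"
  assumes "0 < \<alpha>" "\<alpha> < 1" "continuous_on {a..b} g"
  shows "continuous_on {a..b} (caputo_integral a \<alpha> g)"
proof -
  have "continuous_on {a..b} (caputo_integral a \<alpha> (\<lambda>s. g (clamp a b s)))"
    using assms by (intro continuous_on_caputo_integral_UNIV clamp_continuous_on) auto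
  then show ?thesis
    by (rule continuous_on_eq) (auto intro: caputo_integral_cong)
qed

lemma caputo_integral_has_vector_derivative_param:
  fixes g :: "real \<Rightarrow> real \<Rightarrow> 'a::euclidean_space"
  assumes "0 < \<alpha>" "\<alpha> < 1" "a \<le> t"
    and cont_g: "\<And>\<epsilon>. continuous_on {a..t} (g \<epsilon>)" and cont_h: "continuous_on {a..t} h"
    and uniform: "\<And>e. e > 0 \<Longrightarrow> \<exists>d>0. \<forall>\<epsilon>. \<bar>\<epsilon>\<bar> < d \<longrightarrow>
                 (\<forall>s\<in>{a..t}. norm (g \<epsilon> s - g 0 s - \<epsilon> *\<^sub>R h s) \<le> e * \<bar>\<epsilon>\<bar>)"
  shows "((\<lambda>\<epsilon>. caputo_integral a \<alpha> (g \<epsilon>) t) has_vector_derivative caputo_integral a \<alpha> h t) (at 0)"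
  unfolding has_vector_derivative_def has_derivative_at_alt
proof (intro conjI allI impI)
  show "bounded_linear (\<lambda>\<epsilon>. \<epsilon> *\<^sub>R caputo_integral a \<alpha> h t)"
    by (rule bounded_linear_scaleR_left)
  fix e :: real assume "e > 0"
  define C where "C = (t - a) powr (1 - \<alpha>) / (1 - \<alpha>) / Gamma (1 - \<alpha>)"
  have "0 \<le> C" using assms by (simp add: C_def)
  obtain d where "d > 0" and d: "\<And>\<epsilon> s. \<bar>\<epsilon>\<bar> < d \<Longrightarrow> s \<in> {a..t} \<Longrightarrow>
      norm (g \<epsilon> s - g 0 s - \<epsilon> *\<^sub>R h s) \<le> e / (C + 1) * \<bar>\<epsilon>\<bar>"
    using uniform[of "e / (C + 1)"] \<open>e > 0\<close> \<open>0 \<le> C\<close> by force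
  have "norm (caputo_integral a \<alpha> (g \<epsilon>) t - caputo_integral a \<alpha> (g 0) t - \<epsilon> *\<^sub>R caputo_integral a \<alpha> h t)
      \<le> e * \<bar>\<epsilon>\<bar>" if "\<bar>\<epsilon>\<bar> < d" for \<epsilon>
  proof -
    have "caputo_integral a \<alpha> (g \<epsilon>) t - caputo_integral a \<alpha> (g 0) t - \<epsilon> *\<^sub>R caputo_integral a \<alpha> h t
        = caputo_integral a \<alpha> (\<lambda>s. g \<epsilon> s - g 0 s - \<epsilon> *\<^sub>R h s) t"
      using assms(1-3) cont_g cont_h
      by (simp add: caputo_integral_diff caputo_integral_scaleR continuous_intros)
    also have "norm \<dots> \<le> (e / (C + 1) * \<bar>\<epsilon>\<bar>) * ((t - a) powr (1 - \<alpha>) / (1 - \<alpha>) / Gamma (1 - \<alpha>))"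
      using assms(1-3) that d
      by (intro norm_caputo_integral_le) (auto intro!: continuous_intros cont_g cont_h)
    also have "\<dots> = (e / (C + 1) * \<bar>\<epsilon>\<bar>) * C"
      by (simp add: C_def)
    also have "\<dots> \<le> e * \<bar>\<epsilon>\<bar>"
      using \<open>0 \<le> C\<close> \<open>e > 0\<close> by (simp add: field_simps)
    finally show ?thesis .
  qed
  then show "\<exists>d>0. \<forall>\<epsilon>. norm (\<epsilon> - 0) < d \<longrightarrow> norm (caputo_integral a \<alpha> (g \<epsilon>) t
      - caputo_integral a \<alpha> (g 0) t - (\<epsilon> - 0) *\<^sub>R caputo_integral a \<alpha> h t) \<le> e * norm (\<epsilon> - 0)"
    using \<open>d > 0\<close> by auto
qed

section \<open>Smooth one-parameter families\<close>

text \<open>dirder f (v # vs) differentiates dirder f vs in direction v, so partial_of_velocity is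
  the x_i-derivative of the eps-derivative and velocity_of_partial the other order.\<close>

definition flow_velocity :: "(real \<Rightarrow> real^'n \<Rightarrow> real^'n) \<Rightarrow> real \<Rightarrow> real^'n \<Rightarrow> real^'n" where
  "flow_velocity \<psi> e y = dirder (\<lambda>(e, x). \<psi> e x) [(1, 0)] (e, y)"

definition flow_partial :: "(real \<Rightarrow> real^'n \<Rightarrow> real^'n) \<Rightarrow> 'n \<Rightarrow> real \<Rightarrow> real^'n \<Rightarrow> real^'n" where
  "flow_partial \<psi> i e y = dirder (\<lambda>(e, x). \<psi> e x) [(0, axis i 1)] (e, y)"

definition partial_of_velocity :: "(real \<Rightarrow> real^'n \<Rightarrow> real^'n) \<Rightarrow> 'n \<Rightarrow> real \<Rightarrow> real^'n \<Rightarrow> real^'n" where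
  "partial_of_velocity \<psi> i e y = dirder (\<lambda>(e, x). \<psi> e x) [(0, axis i 1), (1, 0)] (e, y)"

definition velocity_of_partial :: "(real \<Rightarrow> real^'n \<Rightarrow> real^'n) \<Rightarrow> 'n \<Rightarrow> real \<Rightarrow> real^'n \<Rightarrow> real^'n" where
  "velocity_of_partial \<psi> i e y = dirder (\<lambda>(e, x). \<psi> e x) [(1, 0), (0, axis i 1)] (e, y)"

locale smooth_family =
  fixes \<psi> :: "real \<Rightarrow> real^'n \<Rightarrow> real^'n"
  assumes smooth: "smooth_map (\<lambda>(e, x). \<psi> e x)"
begin

lemma has_vector_derivative_dirder:
  "((\<lambda>k. dirder (\<lambda>(e, x). \<psi> e x) vs (p + k *\<^sub>R v)) has_vector_derivative
     dirder (\<lambda>(e, x). \<psi> e x) (v # vs) p) (at 0)"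
  using smooth unfolding smooth_map_def by blast

lemma continuous_dirder: "continuous_on UNIV (dirder (\<lambda>(e, x). \<psi> e x) vs)"
  using smooth unfolding smooth_map_def by blast

lemma continuous_at_dirder_slice: "continuous (at y) (\<lambda>y. dirder (\<lambda>(e, x). \<psi> e x) vs (e, y))"
proof -
  have "continuous (at (e, y)) (dirder (\<lambda>(e, x). \<psi> e x) vs)"
    using continuous_dirder by (simp add: continuous_on_eq_continuous_at)
  then show ?thesis
    using continuous_at_compose[of y "Pair e"] by (simp add: o_def continuous_intros)
qed

lemma has_vector_derivative_flow_param:
  "((\<lambda>k. \<psi> (e + k) y) has_vector_derivative flow_velocity \<psi> e y) (at 0)"
  using has_vector_derivative_dirder[of "[]" "(e, y)" "(1, 0)"] by (simp add: flow_velocity_def)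

lemma has_vector_derivative_flow_axis:
  "((\<lambda>k. \<psi> e (y + k *\<^sub>R axis i 1)) has_vector_derivative flow_partial \<psi> i e y) (at 0)"
  using has_vector_derivative_dirder[of "[]" "(e, y)" "(0, axis i 1)"] by (simp add: flow_partial_def)

lemma has_vector_derivative_flow_velocity_axis:
  "((\<lambda>k. flow_velocity \<psi> e (y + k *\<^sub>R axis i 1)) has_vector_derivative partial_of_velocity \<psi> i e y) (at 0)"
  using has_vector_derivative_dirder[of "[(1, 0)]" "(e, y)" "(0, axis i 1)"]
  by (simp add: flow_velocity_def partial_of_velocity_def)

lemma has_vector_derivative_flow_partial_param:
  "((\<lambda>k. flow_partial \<psi> i (e + k) y) has_vector_derivative velocity_of_partial \<psi> i e y) (at 0)"
  using has_vector_derivative_dirder[of "[(0, axis i 1)]" "(e, y)" "(1, 0)"]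
  by (simp add: flow_partial_def velocity_of_partial_def)

lemma has_derivative_flow:
  "(\<psi> e has_derivative (\<lambda>h. \<Sum>i\<in>UNIV. h$i *\<^sub>R flow_partial \<psi> i e y)) (at y)"
  using has_vector_derivative_flow_axis continuous_at_dirder_slice
  unfolding flow_partial_def by (rule has_derivative_continuous_partials_cart)

lemma has_derivative_flow_velocity:
  "(flow_velocity \<psi> e has_derivative (\<lambda>h. \<Sum>i\<in>UNIV. h$i *\<^sub>R partial_of_velocity \<psi> i e y)) (at y)"
  using has_vector_derivative_flow_velocity_axis continuous_at_dirder_slice
  unfolding partial_of_velocity_def by (rule has_derivative_continuous_partials_cart)

lemma partial_of_velocity_eq_velocity_of_partial:
  "partial_of_velocity \<psi> i e y = velocity_of_partial \<psi> i e y"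
proof -
  let ?p = "\<lambda>u v. (e + u, y + v *\<^sub>R axis i 1)"
  have cont: "continuous (at (0, 0)) (\<lambda>(u, v). dirder (\<lambda>(e, x). \<psi> e x) vs (?p u v))" for vs
  proof -
    have "continuous (at (?p 0 0)) (dirder (\<lambda>(e, x). \<psi> e x) vs)"
      using continuous_dirder by (simp add: continuous_on_eq_continuous_at)
    then show ?thesis
      using continuous_at_compose[of "(0, 0)" "\<lambda>(u, v). ?p u v"]
      by (simp add: o_def case_prod_beta' continuous_intros)
  qed
  have "(\<lambda>u v. partial_of_velocity \<psi> i (e + u) (y + v *\<^sub>R axis i 1)) 0 0
      = (\<lambda>u v. velocity_of_partial \<psi> i (e + u) (y + v *\<^sub>R axis i 1)) 0 0"
  proof (rule mixed_partials_commute[where \<phi>="\<lambda>u v. \<psi> (e + u) (y + v *\<^sub>R axis i 1)"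
        and P="\<lambda>u v. flow_velocity \<psi> (e + u) (y + v *\<^sub>R axis i 1)"
        and Q="\<lambda>u v. flow_partial \<psi> i (e + u) (y + v *\<^sub>R axis i 1)"
        and PQ="\<lambda>u v. partial_of_velocity \<psi> i (e + u) (y + v *\<^sub>R axis i 1)"
        and QP="\<lambda>u v. velocity_of_partial \<psi> i (e + u) (y + v *\<^sub>R axis i 1)"])
    show "((\<lambda>k. \<psi> (e + (u + k)) (y + v *\<^sub>R axis i 1)) has_vector_derivative
        flow_velocity \<psi> (e + u) (y + v *\<^sub>R axis i 1)) (at 0)" for u v
      using has_vector_derivative_flow_param[of "e + u"] by (simp add: add.assoc)
    show "((\<lambda>k. \<psi> (e + u) (y + (v + k) *\<^sub>R axis i 1)) has_vector_derivative
        flow_partial \<psi> i (e + u) (y + v *\<^sub>R axis i 1)) (at 0)" for u v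
      using has_vector_derivative_flow_axis[of "e + u" "y + v *\<^sub>R axis i 1"]
      by (simp add: add.assoc scaleR_add_left)
    show "((\<lambda>k. flow_velocity \<psi> (e + u) (y + (v + k) *\<^sub>R axis i 1)) has_vector_derivative
        partial_of_velocity \<psi> i (e + u) (y + v *\<^sub>R axis i 1)) (at 0)" for u v
      using has_vector_derivative_flow_velocity_axis[of "e + u" "y + v *\<^sub>R axis i 1"]
      by (simp add: add.assoc scaleR_add_left)
    show "((\<lambda>k. flow_partial \<psi> i (e + (u + k)) (y + v *\<^sub>R axis i 1)) has_vector_derivative
        velocity_of_partial \<psi> i (e + u) (y + v *\<^sub>R axis i 1)) (at 0)" for u v
      using has_vector_derivative_flow_partial_param[of i "e + u"] by (simp add: add.assoc)
  qed (simp_all only: partial_of_velocity_def velocity_of_partial_def cont)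
  then show ?thesis by simp
qed

end

section \<open>Variations of a path\<close>

locale flow_variation = smooth_family \<psi>
  for \<psi> :: "real \<Rightarrow> real^'n \<Rightarrow> real^'n" +
  fixes q q' :: "real \<Rightarrow> real^'n" and a b \<alpha> :: real
  assumes flow_zero: "\<psi> 0 = id"
    and a_less_b: "a < b" and alpha: "0 < \<alpha>" "\<alpha> < 1"
    and q_deriv: "\<And>s. s \<in> {a..b} \<Longrightarrow> (q has_vector_derivative q' s) (at s within {a..b})"
    and q'_cont: "continuous_on {a..b} q'"
begin

text \<open>Time derivatives along the moved paths are written out by the chain rule rather than through
  ddt and caputo_left, which only determine them implicitly; moved_point_eq relates the two.\<close>

definition moved_velocity :: "real \<Rightarrow> real \<Rightarrow> real^'n" where
  "moved_velocity \<epsilon> s = (\<Sum>i\<in>UNIV. q' s $ i *\<^sub>R flow_partial \<psi> i \<epsilon> (q s))"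

definition variation :: "real \<Rightarrow> real^'n" where
  "variation s = flow_velocity \<psi> 0 (q s)"

definition variation_velocity :: "real \<Rightarrow> real^'n" where
  "variation_velocity s = (\<Sum>i\<in>UNIV. q' s $ i *\<^sub>R partial_of_velocity \<psi> i 0 (q s))"

definition moved_point :: "real \<Rightarrow> real \<Rightarrow> real \<times> (real^'n) \<times> (real^'n) \<times> (real^'n)" where
  "moved_point \<epsilon> t = (t, \<psi> \<epsilon> (q t), moved_velocity \<epsilon> t, caputo_integral a \<alpha> (moved_velocity \<epsilon>) t)"

lemma continuous_on_q: "continuous_on {a..b} q"
  unfolding continuous_on_eq_continuous_within
  by (intro ballI has_vector_derivative_continuous) (erule q_deriv)

lemma has_vector_derivative_comp_q:
  assumes F: "\<And>y. (F has_derivative (\<lambda>h. \<Sum>i\<in>UNIV. h$i *\<^sub>R D i y)) (at y)" and "s \<in> {a..b}"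
  shows "((\<lambda>s. F (q s)) has_vector_derivative (\<Sum>i\<in>UNIV. q' s $ i *\<^sub>R D i (q s))) (at s within {a..b})"
proof -
  have "((\<lambda>s. F (q s)) has_derivative (\<lambda>h. \<Sum>i\<in>UNIV. (h *\<^sub>R q' s)$i *\<^sub>R D i (q s))) (at s within {a..b})"
    using q_deriv[OF \<open>s \<in> {a..b}\<close>] unfolding has_vector_derivative_def
    by (rule has_derivative_in_compose) (rule has_derivative_at_withinI[OF F])
  then show ?thesis
    by (simp add: has_vector_derivative_def scaleR_sum_right)
qed

lemma has_vector_derivative_moved_path:
  "s \<in> {a..b} \<Longrightarrow> ((\<lambda>s. \<psi> \<epsilon> (q s)) has_vector_derivative moved_velocity \<epsilon> s) (at s within {a..b})"
  unfolding moved_velocity_def by (rule has_vector_derivative_comp_q[OF has_derivative_flow])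

lemma has_vector_derivative_variation:
  "s \<in> {a..b} \<Longrightarrow> (variation has_vector_derivative variation_velocity s) (at s within {a..b})"
  unfolding variation_def[abs_def] variation_velocity_def
  by (rule has_vector_derivative_comp_q[OF has_derivative_flow_velocity])

lemma continuous_on_dirder_comp_q:
  "continuous_on {a..b} (\<lambda>s. dirder (\<lambda>(e, x). \<psi> e x) vs (e, q s))"
  by (rule continuous_on_compose2[OF continuous_dirder]) (auto intro!: continuous_intros continuous_on_q)

lemma continuous_on_moved_velocity: "continuous_on {a..b} (moved_velocity \<epsilon>)"
  unfolding moved_velocity_def flow_partial_def
  by (intro continuous_intros q'_cont continuous_on_dirder_comp_q)

lemma continuous_on_variation_velocity: "continuous_on {a..b} variation_velocity"
  unfolding variation_velocity_def partial_of_velocity_def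
  by (intro continuous_intros q'_cont continuous_on_dirder_comp_q)

lemma moved_velocity_has_vector_derivative_param:
  "((\<lambda>\<tau>. moved_velocity \<tau> s) has_vector_derivative
      (\<Sum>i\<in>UNIV. q' s $ i *\<^sub>R velocity_of_partial \<psi> i \<tau> (q s))) (at \<tau>)"
proof -
  have "((\<lambda>\<tau>. flow_partial \<psi> i \<tau> y) has_vector_derivative velocity_of_partial \<psi> i \<tau> y) (at \<tau>)" for i y
    by (rule has_vector_derivative_at_shift) (rule has_vector_derivative_flow_partial_param)
  then show ?thesis
    unfolding moved_velocity_def
    by (intro has_vector_derivative_sum bounded_linear.has_vector_derivative[OF bounded_linear_scaleR_right])
qed

lemma variation_velocity_eq:
  "variation_velocity s = (\<Sum>i\<in>UNIV. q' s $ i *\<^sub>R velocity_of_partial \<psi> i 0 (q s))"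
  unfolding variation_velocity_def by (simp add: partial_of_velocity_eq_velocity_of_partial)

lemma moved_velocity_uniform_linearization:
  assumes "e > 0"
  shows "\<exists>d>0. \<forall>\<epsilon>. \<bar>\<epsilon>\<bar> < d \<longrightarrow> (\<forall>s\<in>{a..b}.
           norm (moved_velocity \<epsilon> s - moved_velocity 0 s - \<epsilon> *\<^sub>R variation_velocity s) \<le> e * \<bar>\<epsilon>\<bar>)"
proof -
  define W where "W p = (\<Sum>i\<in>UNIV. q' (snd p) $ i *\<^sub>R velocity_of_partial \<psi> i (fst p) (q (snd p)))" for p
  have "continuous_on ({-1..1} \<times> {a..b}) W"
    unfolding W_def velocity_of_partial_def
    by (intro continuous_intros continuous_on_compose2[OF q'_cont]
        continuous_on_compose2[OF continuous_dirder] continuous_on_compose2[OF continuous_on_q]) auto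
  then have "uniformly_continuous_on ({-1..1} \<times> {a..b}) W"
    by (intro compact_uniformly_continuous compact_Times compact_Icc)
  then obtain d where "d > 0" and d: "\<And>p p'. p \<in> {-1..1} \<times> {a..b} \<Longrightarrow> p' \<in> {-1..1} \<times> {a..b} \<Longrightarrow>
      dist p' p < d \<Longrightarrow> dist (W p') (W p) < e"
    unfolding uniformly_continuous_on_def using \<open>e > 0\<close> by metis
  have "norm (moved_velocity \<epsilon> s - moved_velocity 0 s - \<epsilon> *\<^sub>R variation_velocity s) \<le> e * \<bar>\<epsilon>\<bar>"
    if \<epsilon>: "\<bar>\<epsilon>\<bar> < min d 1" and s: "s \<in> {a..b}" for \<epsilon> s
  proof -
    have "norm ((\<lambda>\<tau>. moved_velocity \<tau> s) \<epsilon> - (\<lambda>\<tau>. moved_velocity \<tau> s) 0 - \<epsilon> *\<^sub>R W (0, s)) \<le> e * \<bar>\<epsilon>\<bar>"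
    proof (rule norm_linearization_segment_le)
      fix \<tau> assume \<tau>: "\<tau> \<in> closed_segment 0 \<epsilon>"
      show "((\<lambda>\<tau>. moved_velocity \<tau> s) has_vector_derivative W (\<tau>, s)) (at \<tau> within closed_segment 0 \<epsilon>)"
        unfolding W_def by (simp add: has_vector_derivative_at_within moved_velocity_has_vector_derivative_param)
      have "\<bar>\<tau>\<bar> \<le> \<bar>\<epsilon>\<bar>"
        using \<tau> by (auto simp: closed_segment_eq_real_ivl split: if_splits)
      then have "\<bar>\<tau>\<bar> < min d 1"
        using \<epsilon> by linarith
      then have "dist (W (\<tau>, s)) (W (0, s)) < e"
        using s by (intro d) (auto simp: dist_Pair_Pair abs_less_iff)
      then show "norm (W (\<tau>, s) - W (0, s)) \<le> e"
        by (simp add: dist_norm)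
    qed
    moreover have "W (0, s) = variation_velocity s"
      by (simp add: W_def variation_velocity_eq)
    ultimately show ?thesis by simp
  qed
  then show ?thesis
    using \<open>d > 0\<close> by (intro exI[of _ "min d 1"]) auto
qed

lemma caputo_integral_moved_velocity_has_vector_derivative:
  assumes "t \<in> {a..b}"
  shows "((\<lambda>\<epsilon>. caputo_integral a \<alpha> (moved_velocity \<epsilon>) t) has_vector_derivative
           caputo_integral a \<alpha> variation_velocity t) (at 0)"
proof (rule caputo_integral_has_vector_derivative_param[OF alpha])
  show "a \<le> t" using assms by simp
  have sub: "{a..t} \<subseteq> {a..b}" using assms by simp
  show "continuous_on {a..t} (moved_velocity \<epsilon>)" for \<epsilon>
    by (rule continuous_on_subset[OF continuous_on_moved_velocity sub])
  show "continuous_on {a..t} variation_velocity"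
    by (rule continuous_on_subset[OF continuous_on_variation_velocity sub])
  show "\<exists>d>0. \<forall>\<epsilon>. \<bar>\<epsilon>\<bar> < d \<longrightarrow> (\<forall>s\<in>{a..t}.
      norm (moved_velocity \<epsilon> s - moved_velocity 0 s - \<epsilon> *\<^sub>R variation_velocity s) \<le> e * \<bar>\<epsilon>\<bar>)"
    if "e > 0" for e
    using moved_velocity_uniform_linearization[OF that] sub by blast
qed

lemma moved_point_has_vector_derivative:
  assumes "t \<in> {a..b}"
  shows "((\<lambda>\<epsilon>. moved_point \<epsilon> t) has_vector_derivative
           (0, variation t, variation_velocity t, caputo_integral a \<alpha> variation_velocity t)) (at 0)"
proof -
  have "((\<lambda>\<epsilon>. \<psi> \<epsilon> (q t)) has_vector_derivative variation t) (at 0)"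
    using has_vector_derivative_flow_param[of 0 "q t"] by (simp add: variation_def)
  moreover have "((\<lambda>\<epsilon>. moved_velocity \<epsilon> t) has_vector_derivative variation_velocity t) (at 0)"
    using moved_velocity_has_vector_derivative_param[of t 0] by (simp add: variation_velocity_eq)
  ultimately show ?thesis
    unfolding moved_point_def
    by (intro has_vector_derivative_Pair has_vector_derivative_const
        caputo_integral_moved_velocity_has_vector_derivative assms)
qed

lemma continuous_on_moved_point: "continuous_on {a..b} (moved_point \<epsilon>)"
proof -
  have "continuous_on {a..b} (\<lambda>s. \<psi> \<epsilon> (q s))"
    unfolding continuous_on_eq_continuous_within
    by (intro ballI has_vector_derivative_continuous) (erule has_vector_derivative_moved_path)
  then show ?thesis
    unfolding moved_point_def
    by (intro continuous_intros continuous_on_moved_velocity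
        continuous_on_caputo_integral[OF alpha])
qed

lemma moved_point_eq:
  assumes "s \<in> {a..b}"
  shows "moved_point \<epsilon> s
    = (s, \<psi> \<epsilon> (q s), ddt a b (\<lambda>s. \<psi> \<epsilon> (q s)) s, caputo_left a \<alpha> (\<lambda>s. \<psi> \<epsilon> (q s)) s)"
  using ddt_eq[OF a_less_b assms has_vector_derivative_moved_path[OF assms]]
    caputo_left_eq_caputo_integral[OF has_vector_derivative_moved_path assms]
  by (simp add: moved_point_def)

lemma moved_point_zero:
  "s \<in> {a..b} \<Longrightarrow> moved_point 0 s = (s, q s, ddt a b q s, caputo_left a \<alpha> q s)"
  using moved_point_eq[of s 0] by (simp add: flow_zero)

lemma variation_eq_vector_derivative: "variation s = vector_derivative (\<lambda>\<epsilon>. \<psi> \<epsilon> (q s)) (at 0)"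
  using has_vector_derivative_flow_param[of 0 "q s"]
  by (simp add: variation_def vector_derivative_at)

lemma ddt_variation: "t \<in> {a..b} \<Longrightarrow> ddt a b variation t = variation_velocity t"
  by (rule ddt_eq[OF a_less_b _ has_vector_derivative_variation])

lemma caputo_left_variation:
  "t \<in> {a..b} \<Longrightarrow> caputo_left a \<alpha> variation t = caputo_integral a \<alpha> variation_velocity t"
  by (rule caputo_left_eq_caputo_integral[OF has_vector_derivative_variation])

lemma first_variation_vanishes:
  fixes L :: "real \<Rightarrow> real^'n \<Rightarrow> real^'n \<Rightarrow> real^'n \<Rightarrow> real"
  assumes L': "\<And>p. p \<in> {a..b} \<times> UNIV \<Longrightarrow>
      ((\<lambda>(t, x, v, w). L t x v w) has_derivative blinfun_apply (L' p)) (at p within {a..b} \<times> UNIV)"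
    and invariant: "\<And>\<epsilon> x. x \<in> {a..b} \<Longrightarrow>
      integral {a..x} (\<lambda>t. L t (q t) (ddt a b q t) (caputo_left a \<alpha> q t)) =
      integral {a..x} (\<lambda>t. L t (\<psi> \<epsilon> (q t)) (ddt a b (\<lambda>s. \<psi> \<epsilon> (q s)) t) (caputo_left a \<alpha> (\<lambda>s. \<psi> \<epsilon> (q s)) t))"
    and t: "t \<in> {a..b}"
  shows "along grad2 L a b \<alpha> q t \<bullet> variation t + along grad3 L a b \<alpha> q t \<bullet> ddt a b variation t
           + along grad4 L a b \<alpha> q t \<bullet> caputo_left a \<alpha> variation t = 0"
proof -
  define Lf where "Lf = (\<lambda>(t, x, v, w). L t x v w)"
  have in_S: "moved_point \<epsilon> s \<in> {a..b} \<times> UNIV" if "s \<in> {a..b}" for \<epsilon> s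
    using that by (simp add: moved_point_def)
  have "continuous_on ({a..b} \<times> UNIV) Lf"
    unfolding continuous_on_eq_continuous_within Lf_def
    by (intro ballI has_derivative_continuous) (erule L')
  then have cont: "continuous_on {a..b} (\<lambda>s. Lf (moved_point \<epsilon> s))" for \<epsilon>
    by (rule continuous_on_compose2[OF _ continuous_on_moved_point]) (use in_S in blast)
  have const: "Lf (moved_point \<epsilon> t) = Lf (moved_point 0 t)" for \<epsilon>
  proof (rule continuous_eq_if_integrals_eq[OF a_less_b cont cont _ t])
    fix x assume x: "x \<in> {a..b}"
    have "integral {a..x} (\<lambda>s. Lf (moved_point 0 s))
        = integral {a..x} (\<lambda>t. L t (q t) (ddt a b q t) (caputo_left a \<alpha> q t))"
      using x by (intro integral_cong) (simp add: Lf_def moved_point_zero)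
    also have "\<dots> = integral {a..x}
        (\<lambda>t. L t (\<psi> \<epsilon> (q t)) (ddt a b (\<lambda>s. \<psi> \<epsilon> (q s)) t) (caputo_left a \<alpha> (\<lambda>s. \<psi> \<epsilon> (q s)) t))"
      by (rule invariant[OF x])
    also have "\<dots> = integral {a..x} (\<lambda>s. Lf (moved_point \<epsilon> s))"
      using x by (intro integral_cong) (simp add: Lf_def moved_point_eq)
    finally show "integral {a..x} (\<lambda>s. Lf (moved_point \<epsilon> s)) = integral {a..x} (\<lambda>s. Lf (moved_point 0 s))"
      by (rule sym)
  qed
  have "blinfun_apply (L' (moved_point 0 t))
      (0, variation t, variation_velocity t, caputo_integral a \<alpha> variation_velocity t) = 0"
    using L'[OF in_S[OF t, of 0]] moved_point_has_vector_derivative[OF t] in_S[OF t] const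
    unfolding Lf_def by (rule derivative_zero_if_constant_along_curve)
  moreover have "blinfun_apply (L' (moved_point 0 t))
      (0, variation t, variation_velocity t, caputo_integral a \<alpha> variation_velocity t)
    = along grad2 L a b \<alpha> q t \<bullet> variation t + along grad3 L a b \<alpha> q t \<bullet> variation_velocity t
      + along grad4 L a b \<alpha> q t \<bullet> caputo_integral a \<alpha> variation_velocity t"
    using L'[OF in_S[OF t, of 0]] t unfolding moved_point_zero[OF t] along_def
    by (rule derivative_eq_inner_grads)
  ultimately show ?thesis
    by (simp only: ddt_variation[OF t] caputo_left_variation[OF t])
qed

end

theorem mainTheorem3:
  fixes a b \<alpha> :: real
    and L :: "real \<Rightarrow> real^'n \<Rightarrow> real^'n \<Rightarrow> real^'n \<Rightarrow> real"
    and \<psi>2 :: "real \<Rightarrow> real^'n \<Rightarrow> real^'n"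
    and q :: "real \<Rightarrow> real^'n"
  assumes "a < b" and "0 < \<alpha>" and "\<alpha> < 1"
    and "C2_on ({a..b} \<times> UNIV) (\<lambda>(t, x, v, w). L t x v w)"
    and "one_param_group_diffeo \<psi>2"
    and invariant: "\<forall>p. EL_solution a b \<alpha> L p \<longrightarrow>
           (\<forall>\<epsilon> ta tb. a \<le> ta \<and> ta \<le> tb \<and> tb \<le> b \<longrightarrow>
              integral {ta..tb} (\<lambda>t. L t (p t) (ddt a b p t) (caputo_left a \<alpha> p t)) =
              integral {ta..tb} (\<lambda>t. L t (\<psi>2 \<epsilon> (p t)) (ddt a b (\<lambda>s. \<psi>2 \<epsilon> (p s)) t)
                                        (caputo_left a \<alpha> (\<lambda>s. \<psi>2 \<epsilon> (p s)) t)))"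
    and "EL_solution a b \<alpha> L q"
  shows "\<forall>t\<in>{a..b}.
           (let f2 = (\<lambda>s. vector_derivative (\<lambda>e. \<psi>2 e (q s)) (at 0)) in
              f2 t \<bullet> ddt a b (along grad3 L a b \<alpha> q) t
            + along grad3 L a b \<alpha> q t \<bullet> ddt a b f2 t
            + along grad4 L a b \<alpha> q t \<bullet> caputo_left a \<alpha> f2 t
            - f2 t \<bullet> rl_right_deriv a b \<alpha> (along grad4 L a b \<alpha> q) t = 0)"
proof
  \<comment> \<open>only smoothness of psi2 with psi2 0 = id, the first derivative of L and invariance on the
    intervals [a, x] are used\<close>
  fix t assume t: "t \<in> {a..b}"
  obtain q' where q': "\<And>s. s \<in> {a..b} \<Longrightarrow> (q has_vector_derivative q' s) (at s within {a..b})"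
      "continuous_on {a..b} q'"
    using \<open>EL_solution a b \<alpha> L q\<close> unfolding EL_solution_def by blast
  interpret flow_variation \<psi>2 q q' a b \<alpha>
    using \<open>one_param_group_diffeo \<psi>2\<close> assms(1-3) q'
    by unfold_locales (auto simp: one_param_group_diffeo_def)
  obtain L' where "\<And>p. p \<in> {a..b} \<times> UNIV \<Longrightarrow>
      ((\<lambda>(t, x, v, w). L t x v w) has_derivative blinfun_apply (L' p)) (at p within {a..b} \<times> UNIV)"
    using \<open>C2_on ({a..b} \<times> UNIV) (\<lambda>(t, x, v, w). L t x v w)\<close> unfolding C2_on_def by blast
  then have first_variation: "along grad2 L a b \<alpha> q t \<bullet> variation t + along grad3 L a b \<alpha> q t \<bullet> ddt a b variation t
      + along grad4 L a b \<alpha> q t \<bullet> caputo_left a \<alpha> variation t = 0"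
    by (rule first_variation_vanishes) (use invariant \<open>EL_solution a b \<alpha> L q\<close> t in auto)
  have "along grad2 L a b \<alpha> q t - ddt a b (along grad3 L a b \<alpha> q) t
      + rl_right_deriv a b \<alpha> (along grad4 L a b \<alpha> q) t = 0"
    using \<open>EL_solution a b \<alpha> L q\<close> t unfolding EL_solution_def by blast
  then have "along grad2 L a b \<alpha> q t
      = ddt a b (along grad3 L a b \<alpha> q) t - rl_right_deriv a b \<alpha> (along grad4 L a b \<alpha> q) t"
    by (simp add: eq_diff_eq diff_add_eq)
  then show "let f2 = (\<lambda>s. vector_derivative (\<lambda>e. \<psi>2 e (q s)) (at 0)) in
              f2 t \<bullet> ddt a b (along grad3 L a b \<alpha> q) t
            + along grad3 L a b \<alpha> q t \<bullet> ddt a b f2 t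
            + along grad4 L a b \<alpha> q t \<bullet> caputo_left a \<alpha> f2 t
            - f2 t \<bullet> rl_right_deriv a b \<alpha> (along grad4 L a b \<alpha> q) t = 0"
    using first_variation
    by (simp add: Let_def variation_eq_vector_derivative[symmetric] inner_diff_right inner_commute)
qed

end
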